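(* Let $\eta>0$ and let $F$ be the (possibly defective) distribution function of a random variable $V$ with values in $(0,+\infty]$, admitting a density $f$ on $(0,\infty)$ and hazard function $h(t)=f(t)/(1-F(t))$ for $t>0$, and suppose that $\int_0^\infty h(t)\,\mathrm{d}t<1$. Construct random times $0<T_1<T_2<\cdots$ as follows. At time $0$, draw $V^{(0)}_0\sim\mathrm{Exponential}(\eta)$ and set $T_1=V^{(0)}_0$. Recursively, for $i\ge 1$, given $T_1,\dots,T_i$ and independently of everything drawn previously, draw mutually independent random variables $V^{(i)}_0\sim \mathrm{Exponential}(\eta)$ and, for each $j=1,\dots,i$, $V^{(i)}_j$ with the law of $V-(T_i-T_j)$ conditional on $V\ge T_i-T_j$, where $V\sim F$; then set $W_i=\min_{0\le j\le i}V^{(i)}_j$ and $T_{i+1}=T_i+W_i$. Let $N$ be the point process on $\mathbb{R}_+$ with atoms at the times $T_1,T_2,\dots$, i.e. $N(A)=\sum_{i\ge1}\mathbf{1}_{\{T_i\in A\}}$. Then $N$ has conditional intensity $$\lambda(t)=\eta+\int_{-\infty}^{t}h(t-s)\,N(\mathrm{d}s)=\eta+\sum_{T_j<t}h(t-T_j),$$ i.e. $N$ is a Hawkes process with baseline intensity $\eta$ and excitation function $h$.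
   Context: For a simple point process on $\mathbb{R}_+$ with event times $T_1<T_2<\cdots$ (and $T_0=0$), its conditional intensity is defined piecewise: for $T_{i}<t\le T_{i+1}$, $\lambda(t)=f_{i+1}(t\mid\mathcal{H}_t)/S_{i+1}(t\mid\mathcal{H}_t)$, where $f_{i+1}(\cdot\mid\mathcal{H}_t)$ is the conditional density of the next event time $T_{i+1}$ given the history (the previous event times $T_1,\dots,T_i$) and $S_{i+1}(t\mid\mathcal{H}_t)=1-\int_{T_i}^t f_{i+1}(s\mid\mathcal{H}_t)\,\mathrm{d}s$ is the associated survival function; that is, between events, $\lambda$ is the hazard function of the next event time given the past. A Hawkes process with baseline $\eta>0$ and excitation function $h\ge0$ is a point process with conditional intensity $\lambda(t)=\eta+\sum_{T_j<t}h(t-T_j)$. A distribution $F$ is called defective if $\lim_{t\to\infty}F(t)<1$ (positive mass at $+\infty$). *)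

theory Defs
  imports "HOL-Probability.Probability"
begin

text \<open>Law of V - c conditional on V \<ge> c, where V has law mu (a measure on ereal,
  values in (0,+\<infinity>]).\<close>
definition cond_excess :: "ereal measure \<Rightarrow> real \<Rightarrow> ereal measure" where
  "cond_excess mu c = distr (uniform_measure mu {ereal c..}) borel (\<lambda>v. v - ereal c)"

definition last_time :: "real list \<Rightarrow> real" where
  "last_time ts = (if ts = [] then 0 else last ts)"

text \<open>The construction: given the history ts = [T_1,...,T_i], the next event time is
  T_{i+1} = T_i + min_{0\<le>j\<le>i} V^(i)_j with V^(i)_0 ~ Exp(eta) and
  V^(i)_j ~ law of V - (T_i - T_j) given V \<ge> T_i - T_j, all mutually independent.
  This is the conditional law of T_{i+1} given T_1,...,T_i.\<close>
definition next_time_law :: "ereal measure \<Rightarrow> real \<Rightarrow> real list \<Rightarrow> ereal measure" where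
  "next_time_law mu eta ts =
     (let l = last_time ts; n = length ts in
      distr (PiM {0..n} (\<lambda>j. if j = 0
                              then distr (density lborel (exponential_density eta)) borel ereal
                              else cond_excess mu (l - ts ! (j - 1))))
            borel (\<lambda>\<omega>. ereal l + Min (\<omega> ` {0..n})))"

end

theory Submission
  imports Defs
begin

(*
  Given the history T_1 < ... < T_i, the waiting time W_i is the minimum of independent lifetimes:
  an Exp(eta) clock and, for each j, the residual lifetime of V beyond the age T_i - T_j.
  Survival functions of independent variables multiply, and if G_k = 1 - \<integral>_0^w g_k then
  G_1 ... G_m = 1 - \<integral>_0^w \<Sum>_j g_j \<Prod>_{k \<noteq> j} G_k (a Fubini argument, by induction on m).
  Hence the hazard of the minimum is the sum of the hazards: eta for the clock and
  h(T_i - T_j + w) for the residual lifetimes, which is the Hawkes intensity at t = T_i + w.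
  The hypothesis \<integral> h < 1 is what makes the conditionings well defined: by an intermediate value
  argument, the survival function of V never drops below 1 - \<integral> h > 0.
*)

lemma sum_mult_prod_remove:
  fixes G g :: "'i \<Rightarrow> 'a::field"
  assumes "finite I" and "\<And>i. i \<in> I \<Longrightarrow> G i \<noteq> 0"
  shows "(\<Sum>j\<in>I. g j * (\<Prod>k\<in>I-{j}. G k)) = (\<Prod>k\<in>I. G k) * (\<Sum>j\<in>I. g j / G j)"
  unfolding sum_distrib_left
proof (rule sum.cong)
  fix j assume "j \<in> I"
  then show "g j * (\<Prod>k\<in>I-{j}. G k) = (\<Prod>k\<in>I. G k) * (g j / G j)"
    using assms by (simp add: prod.remove[of I j])
qed simp

lemma nn_integral_split_weight:
  fixes p Q :: "real \<Rightarrow> real"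
  assumes [measurable]: "p \<in> borel_measurable borel" "Q \<in> borel_measurable borel" "A \<in> sets borel"
    and "\<And>s. 0 \<le> p s" and "\<And>s. 0 \<le> Q s" and "\<And>s. Q s \<le> 1"
  shows "(\<integral>\<^sup>+s\<in>A. ennreal (p s) \<partial>lborel) =
    (\<integral>\<^sup>+s\<in>A. ennreal (p s * Q s) \<partial>lborel) + (\<integral>\<^sup>+s\<in>A. ennreal (p s * (1 - Q s)) \<partial>lborel)"
proof -
  have "ennreal (p s) * indicator A s =
      ennreal (p s * Q s) * indicator A s + ennreal (p s * (1 - Q s)) * indicator A s" for s
  proof -
    have "ennreal (p s) = ennreal (p s * Q s + p s * (1 - Q s))"
      by (simp add: algebra_simps)
    then show ?thesis
      using assms(4-6)[of s] by (simp add: ennreal_plus distrib_right)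
  qed
  then show ?thesis
    by (simp add: nn_integral_add)
qed

lemma nn_integral_Ioc_times_split:
  fixes a b :: "real \<Rightarrow> ennreal"
  assumes [measurable]: "a \<in> borel_measurable borel" "b \<in> borel_measurable borel"
  shows "(\<integral>\<^sup>+s\<in>{0<..w}. a s \<partial>lborel) * (\<integral>\<^sup>+r\<in>{0<..w}. b r \<partial>lborel) =
     (\<integral>\<^sup>+s\<in>{0<..w}. a s * (\<integral>\<^sup>+r\<in>{0<..s}. b r \<partial>lborel) \<partial>lborel) +
     (\<integral>\<^sup>+r\<in>{0<..w}. b r * (\<integral>\<^sup>+s\<in>{0<..r}. a s \<partial>lborel) \<partial>lborel)"
proof -
  \<comment> \<open>split the square along its diagonal, which is a null set\<close>
  let ?below = "\<lambda>s r. a s * b r * of_bool (0 < s \<and> s \<le> w \<and> 0 < r \<and> r \<le> s)"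
  let ?above = "\<lambda>s r. a s * b r * of_bool (0 < r \<and> r \<le> w \<and> 0 < s \<and> s < r)"
  have square: "indicator {0<..w} s * indicator {0<..w} r =
      of_bool (0 < s \<and> s \<le> w \<and> 0 < r \<and> r \<le> s) + (of_bool (0 < r \<and> r \<le> w \<and> 0 < s \<and> s < r) :: ennreal)"
    for s r :: real
    by (auto simp: indicator_def)
  have "(\<integral>\<^sup>+s\<in>{0<..w}. a s \<partial>lborel) * (\<integral>\<^sup>+r\<in>{0<..w}. b r \<partial>lborel)
      = (\<integral>\<^sup>+s. \<integral>\<^sup>+r. a s * b r * (indicator {0<..w} s * indicator {0<..w} r) \<partial>lborel \<partial>lborel)"
    by (subst nn_integral_multc[symmetric], simp, intro nn_integral_cong)
       (simp add: nn_integral_cmult[symmetric] mult_ac)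
  also have "\<dots> = (\<integral>\<^sup>+s. \<integral>\<^sup>+r. ?below s r + ?above s r \<partial>lborel \<partial>lborel)"
    unfolding square by (simp add: distrib_left mult_ac)
  also have "\<dots> = (\<integral>\<^sup>+s. \<integral>\<^sup>+r. ?below s r \<partial>lborel \<partial>lborel) + (\<integral>\<^sup>+s. \<integral>\<^sup>+r. ?above s r \<partial>lborel \<partial>lborel)"
    by (subst nn_integral_add[symmetric]) (measurable, intro nn_integral_cong nn_integral_add, measurable)
  also have "(\<integral>\<^sup>+s. \<integral>\<^sup>+r. ?above s r \<partial>lborel \<partial>lborel) = (\<integral>\<^sup>+r. \<integral>\<^sup>+s. ?above s r \<partial>lborel \<partial>lborel)"
    by (rule lborel_pair.Fubini') simp
  also have "\<dots> = (\<integral>\<^sup>+r\<in>{0<..w}. b r * (\<integral>\<^sup>+s\<in>{0<..r}. a s \<partial>lborel) \<partial>lborel)"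
  proof (intro nn_integral_cong)
    fix r :: real
    have open_closed: "(\<integral>\<^sup>+s\<in>{0<..<r}. a s \<partial>lborel) = (\<integral>\<^sup>+s\<in>{0<..r}. a s \<partial>lborel)"
      by (intro nn_integral_cong_AE eventually_mono[OF AE_lborel_singleton[of r]])
         (auto simp: indicator_def)
    have "(\<integral>\<^sup>+s. ?above s r \<partial>lborel) =
        (\<integral>\<^sup>+s. b r * indicator {0<..w} r * (a s * indicator {0<..<r} s) \<partial>lborel)"
      by (intro nn_integral_cong) (auto simp: indicator_def mult.commute)
    also have "\<dots> = b r * indicator {0<..w} r * (\<integral>\<^sup>+s\<in>{0<..<r}. a s \<partial>lborel)"
      by (rule nn_integral_cmult) simp
    finally show "(\<integral>\<^sup>+s. ?above s r \<partial>lborel) = b r * (\<integral>\<^sup>+s\<in>{0<..r}. a s \<partial>lborel) * indicator {0<..w} r"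
      by (simp add: open_closed mult_ac)
  qed
  also have "(\<integral>\<^sup>+s. \<integral>\<^sup>+r. ?below s r \<partial>lborel \<partial>lborel) =
      (\<integral>\<^sup>+s\<in>{0<..w}. a s * (\<integral>\<^sup>+r\<in>{0<..s}. b r \<partial>lborel) \<partial>lborel)"
  proof (intro nn_integral_cong)
    fix s :: real
    have "(\<integral>\<^sup>+r. ?below s r \<partial>lborel) =
        (\<integral>\<^sup>+r. a s * indicator {0<..w} s * (b r * indicator {0<..s} r) \<partial>lborel)"
      by (intro nn_integral_cong) (auto simp: indicator_def)
    also have "\<dots> = a s * indicator {0<..w} s * (\<integral>\<^sup>+r\<in>{0<..s}. b r \<partial>lborel)"
      by (rule nn_integral_cmult) simp
    finally show "(\<integral>\<^sup>+r. ?below s r \<partial>lborel) = a s * (\<integral>\<^sup>+r\<in>{0<..s}. b r \<partial>lborel) * indicator {0<..w} s"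
      by (simp add: mult_ac)
  qed
  finally show ?thesis .
qed

section \<open>Survival functions with a density\<close>

definition survival_with_density :: "(real \<Rightarrow> real) \<Rightarrow> (real \<Rightarrow> real) \<Rightarrow> bool" where
  "survival_with_density G g \<longleftrightarrow> g \<in> borel_measurable borel \<and> (\<forall>s. 0 \<le> g s) \<and>
     (\<forall>w. 0 \<le> G w \<and> G w \<le> 1 \<and> (\<integral>\<^sup>+s\<in>{0<..w}. ennreal (g s) \<partial>lborel) = ennreal (1 - G w))"

lemma survival_with_densityD:
  assumes "survival_with_density G g"
  shows "g \<in> borel_measurable borel" and "0 \<le> g s" and "0 \<le> G w" and "G w \<le> 1"
    and "(\<integral>\<^sup>+s\<in>{0<..w}. ennreal (g s) \<partial>lborel) = ennreal (1 - G w)"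
  using assms by (auto simp: survival_with_density_def)

lemma survival_with_density_antimono:
  assumes G: "survival_with_density G g" and "v \<le> w"
  shows "G w \<le> G v"
proof -
  have "ennreal (1 - G v) \<le> ennreal (1 - G w)"
    unfolding survival_with_densityD(5)[OF G, symmetric]
    using \<open>v \<le> w\<close> by (intro nn_integral_mono) (auto simp: indicator_def)
  then show ?thesis
    using survival_with_densityD(4)[OF G, of w] by (simp add: ennreal_le_iff)
qed

lemma survival_with_density_measurable:
  assumes "survival_with_density G g"
  shows "G \<in> borel_measurable borel"
proof -
  have "mono (\<lambda>w. - G w)"
    using survival_with_density_antimono[OF assms] by (auto simp: mono_def)
  then have "(\<lambda>w. - (- G w)) \<in> borel_measurable borel"
    by (intro borel_measurable_uminus borel_measurable_mono)
  then show ?thesis by simp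
qed

lemma survival_with_density_nonpos:
  assumes "survival_with_density G g" and "w \<le> 0"
  shows "G w = 1"
  using survival_with_densityD(5)[OF assms(1), of w] survival_with_densityD(4)[OF assms(1), of w]
    \<open>w \<le> 0\<close> by simp

lemma survival_with_density_interval:
  assumes G: "survival_with_density G g" and "0 \<le> v" "v \<le> w"
  shows "(\<integral>\<^sup>+s\<in>{v<..w}. ennreal (g s) \<partial>lborel) = ennreal (G v - G w)"
proof -
  note [measurable] = survival_with_densityD(1)[OF G]
  have "ennreal (1 - G w) = (\<integral>\<^sup>+s. ennreal (g s) * indicator {0<..v} s + ennreal (g s) * indicator {v<..w} s \<partial>lborel)"
    unfolding survival_with_densityD(5)[OF G, symmetric]
    using assms(2,3) by (intro nn_integral_cong) (auto simp: indicator_def)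
  also have "\<dots> = ennreal (1 - G v) + (\<integral>\<^sup>+s\<in>{v<..w}. ennreal (g s) \<partial>lborel)"
    by (simp add: nn_integral_add survival_with_densityD(5)[OF G])
  finally have "ennreal (1 - G v) + (\<integral>\<^sup>+s\<in>{v<..w}. ennreal (g s) \<partial>lborel) = ennreal (1 - G v) + ennreal (G v - G w)"
    using survival_with_density_antimono[OF G \<open>v \<le> w\<close>] survival_with_densityD(4)[OF G, of v]
    by (simp add: ennreal_plus[symmetric])
  then show ?thesis
    by (simp add: ennreal_add_left_cancel)
qed

lemma survival_with_density_isCont:
  assumes G: "survival_with_density G g"
  shows "isCont G x"
proof -
  note [measurable] = survival_with_densityD(1)[OF G]
  define nu where "nu = density lborel (\<lambda>s. ennreal (g s) * indicator {0<..} s)"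
  have sets_nu [simp]: "sets nu = sets borel" and space_nu [simp]: "space nu = UNIV"
    by (simp_all add: nu_def)
  have nu_atMost: "emeasure nu {..w} = ennreal (1 - G w)" for w
    unfolding nu_def survival_with_densityD(5)[OF G, symmetric]
    by (subst emeasure_density) (auto intro!: nn_integral_cong split: split_indicator)
  have "emeasure nu (\<Union>n. {..real n}) = (SUP n. emeasure nu {..real n})"
    by (rule SUP_emeasure_incseq[symmetric]) (auto simp: incseq_def)
  also have "(\<Union>n. {..real n}) = UNIV"
    by (auto intro: real_nat_ceiling_ge)
  finally have "emeasure nu UNIV \<le> 1"
    using survival_with_densityD(3)[OF G] by (auto simp: nu_atMost intro!: SUP_least)
  then have "finite_measure nu"
    by (intro finite_measureI) (auto simp: top_unique)
  then have nu: "finite_borel_measure nu"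
    by (simp add: finite_borel_measure_def finite_borel_measure_axioms_def)
  have "emeasure nu {x} = 0"
    unfolding nu_def
    by (subst emeasure_density)
       (auto simp: nn_integral_0_iff_AE intro!: eventually_mono[OF AE_lborel_singleton[of x]])
  then have "isCont (cdf nu) x"
    by (simp add: finite_borel_measure.isCont_cdf[OF nu] measure_def)
  moreover have "cdf nu = (\<lambda>w. 1 - G w)"
    using survival_with_densityD(4)[OF G] by (auto simp: cdf_def measure_def nu_atMost)
  ultimately have "isCont (\<lambda>w. 1 - G w) x"
    by simp
  from isCont_diff[OF continuous_const[of _ 1] this] show ?thesis
    by simp
qed

lemma survival_with_density_hazard_bound:
  assumes G: "survival_with_density G g" and h: "\<And>t. 0 < t \<Longrightarrow> h t = g t / G t"
  shows "ennreal (1 - G x) \<le> (\<integral>\<^sup>+t\<in>{0<..}. ennreal (h t) \<partial>lborel)"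
proof (rule ccontr)
  assume "\<not> ?thesis"
  then obtain r where r: "(\<integral>\<^sup>+t\<in>{0<..}. ennreal (h t) \<partial>lborel) = ennreal r" "0 \<le> r" "r < 1 - G x"
    by (cases "\<integral>\<^sup>+t\<in>{0<..}. ennreal (h t) \<partial>lborel") (auto simp: ennreal_less_iff not_le)
  define y where "y = (r + (1 - G x)) / 2"
  have "0 \<le> x"
    using r survival_with_density_nonpos[OF G, of x] by force
  moreover have "1 - G 0 \<le> y" "y \<le> 1 - G x"
    using r survival_with_density_nonpos[OF G, of 0] by (auto simp: y_def)
  moreover have "continuous_on {0..x} (\<lambda>w. 1 - G w)"
    using survival_with_density_isCont[OF G] by (intro continuous_at_imp_continuous_on) auto
  ultimately obtain t where t: "0 \<le> t" "1 - G t = y"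
    using IVT'[of "\<lambda>w. 1 - G w" 0 y x] by auto
  have "ennreal y = (\<integral>\<^sup>+s\<in>{0<..t}. ennreal (g s) \<partial>lborel)"
    by (simp add: survival_with_densityD(5)[OF G] t)
  also have "\<dots> \<le> (\<integral>\<^sup>+s\<in>{0<..}. ennreal (h s) \<partial>lborel)"
  proof (intro nn_integral_mono)
    fix s :: real
    show "ennreal (g s) * indicator {0<..t} s \<le> ennreal (h s) * indicator {0<..} s"
    proof (cases "0 < s \<and> s \<le> t")
      case True
      have "0 < G s" "G s \<le> 1"
        using survival_with_density_antimono[OF G, of s t] True t r
          survival_with_densityD(3)[OF G, of x] survival_with_densityD(4)[OF G, of s]
        by (auto simp: y_def)
      then have "g s \<le> h s"
        using h[of s] True survival_with_densityD(2)[OF G, of s] by (simp add: le_divide_eq mult_left_le)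
      then show ?thesis
        using True by (simp add: ennreal_leI)
    qed auto
  qed
  also have "\<dots> < ennreal y"
    using r by (simp add: y_def ennreal_less_iff)
  finally show False
    by simp
qed

lemma survival_with_density_residual:
  assumes G: "survival_with_density G g" and "0 \<le> c" and pos: "0 < G c"
  shows "survival_with_density (\<lambda>w. G (c + max 0 w) / G c) (\<lambda>s. g (c + s) / G c)"
proof -
  note [measurable] = survival_with_densityD(1)[OF G]
  have "(\<integral>\<^sup>+s\<in>{0<..w}. ennreal (g (c + s) / G c) \<partial>lborel) = ennreal (1 - G (c + max 0 w) / G c)" for w
  proof (cases "0 \<le> w")
    case True
    have "(\<integral>\<^sup>+s\<in>{0<..w}. ennreal (g (c + s) / G c) \<partial>lborel) =
        (\<integral>\<^sup>+s. ennreal (g (c + s)) * indicator {c<..c + w} (c + s) / ennreal (G c) \<partial>lborel)"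
      using pos survival_with_densityD(2)[OF G] by (intro nn_integral_cong) (auto simp: divide_ennreal indicator_def)
    also have "\<dots> = (\<integral>\<^sup>+s\<in>{c<..c + w}. ennreal (g s) \<partial>lborel) / ennreal (G c)"
      using nn_integral_real_affine[of "\<lambda>s. ennreal (g s) * indicator {c<..c + w} s" 1 c]
      by (simp add: nn_integral_divide)
    also have "\<dots> = ennreal (1 - G (c + max 0 w) / G c)"
      using True pos \<open>0 \<le> c\<close> survival_with_density_antimono[OF G, of c "c + w"]
      by (simp add: survival_with_density_interval[OF G] divide_ennreal diff_divide_distrib)
    finally show ?thesis .
  qed (use pos in simp)
  moreover have "G (c + max 0 w) / G c \<le> 1" for w
    using survival_with_density_antimono[OF G, of c "c + max 0 w"] pos by simp
  ultimately show ?thesis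
    using survival_with_densityD(2,3)[OF G] pos by (simp add: survival_with_density_def)
qed

lemma survival_with_density_mult:
  assumes A: "survival_with_density A a" and B: "survival_with_density B b"
  shows "survival_with_density (\<lambda>w. A w * B w) (\<lambda>s. a s * B s + A s * b s)"
proof -
  note [measurable] = survival_with_densityD(1)[OF A] survival_with_densityD(1)[OF B]
    survival_with_density_measurable[OF A] survival_with_density_measurable[OF B]
  note bounds = survival_with_densityD(2-4)[OF A] survival_with_densityD(2-4)[OF B]
  have "ennreal (1 - A w) + ennreal (1 - B w) =
      (\<integral>\<^sup>+s\<in>{0<..w}. ennreal (a s * B s + A s * b s) \<partial>lborel) + ennreal (1 - A w) * ennreal (1 - B w)"
    for w
  proof -
    have "ennreal (1 - A w) * ennreal (1 - B w) =
        (\<integral>\<^sup>+s\<in>{0<..w}. ennreal (a s * (1 - B s)) \<partial>lborel) + (\<integral>\<^sup>+s\<in>{0<..w}. ennreal (b s * (1 - A s)) \<partial>lborel)"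
      using nn_integral_Ioc_times_split[of "\<lambda>s. ennreal (a s)" "\<lambda>s. ennreal (b s)" w] bounds
      by (simp add: survival_with_densityD(5)[OF A] survival_with_densityD(5)[OF B] ennreal_mult)
    moreover have "(\<integral>\<^sup>+s\<in>{0<..w}. ennreal (a s * B s + A s * b s) \<partial>lborel) =
        (\<integral>\<^sup>+s\<in>{0<..w}. ennreal (a s * B s) \<partial>lborel) + (\<integral>\<^sup>+s\<in>{0<..w}. ennreal (A s * b s) \<partial>lborel)"
      using bounds by (simp add: ennreal_plus distrib_right nn_integral_add)
    ultimately show ?thesis
      using nn_integral_split_weight[of a B "{0<..w}"] nn_integral_split_weight[of b A "{0<..w}"] bounds
      by (simp add: survival_with_densityD(5)[OF A] survival_with_densityD(5)[OF B] add_ac mult.commute)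
  qed
  then have "(\<integral>\<^sup>+s\<in>{0<..w}. ennreal (a s * B s + A s * b s) \<partial>lborel) =
      ennreal (1 - A w) + ennreal (1 - B w) - ennreal (1 - A w) * ennreal (1 - B w)" for w
    by (simp add: ennreal_add_diff_cancel_right ennreal_mult_eq_top_iff)
  moreover have "ennreal (1 - A w) + ennreal (1 - B w) - ennreal (1 - A w) * ennreal (1 - B w) =
      ennreal (1 - A w * B w)" for w
  proof -
    have "ennreal (1 - A w) + ennreal (1 - B w) - ennreal (1 - A w) * ennreal (1 - B w) =
        ennreal ((1 - A w) + (1 - B w) - (1 - A w) * (1 - B w))"
      using bounds by (simp add: ennreal_mult[symmetric] ennreal_plus[symmetric] ennreal_minus)
    then show ?thesis
      by (simp add: algebra_simps)
  qed
  ultimately show ?thesis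
    using bounds by (simp add: survival_with_density_def mult_le_one)
qed

lemma survival_with_density_prod:
  assumes "finite I" and "\<And>i. i \<in> I \<Longrightarrow> survival_with_density (G i) (g i)"
  shows "survival_with_density (\<lambda>w. \<Prod>i\<in>I. G i w) (\<lambda>s. \<Sum>j\<in>I. g j s * (\<Prod>k\<in>I-{j}. G k s))"
  using assms
proof (induction I rule: finite_induct)
  case empty
  then show ?case by (simp add: survival_with_density_def)
next
  case (insert i I)
  have "(\<Sum>j\<in>insert i I. g j s * (\<Prod>k\<in>insert i I-{j}. G k s)) =
      (\<Sum>j\<in>I. g j s * (\<Prod>k\<in>I-{j}. G k s)) * G i s + (\<Prod>k\<in>I. G k s) * g i s" for s
  proof -
    have "(\<Prod>k\<in>insert i I-{j}. G k s) = G i s * (\<Prod>k\<in>I-{j}. G k s)" if "j \<in> I" for j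
    proof -
      have "insert i I - {j} = insert i (I - {j})" using insert.hyps that by auto
      then show ?thesis using insert.hyps by simp
    qed
    then show ?thesis
      using insert.hyps by (simp add: insert_Diff_if sum_distrib_left sum_distrib_right mult_ac cong: sum.cong)
  qed
  moreover have "(\<Prod>k\<in>insert i I. G k w) = (\<Prod>k\<in>I. G k w) * G i w" for w
    using insert.hyps by (simp add: mult.commute)
  ultimately show ?case
    using survival_with_density_mult[OF insert.IH insert.prems[of i]] insert.prems by simp
qed

section \<open>Laws on the extended real line\<close>

lemma ereal_atMost_preimage: "ereal -` {..ereal a} = {..a}"
  by auto

lemma emeasure_distr_ereal_infinity:
  assumes "sets N = sets (borel :: real measure)"
  shows "emeasure (distr N borel ereal) {\<infinity>} = 0"
proof -
  have "ereal -` {\<infinity>} = {}"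
    by auto
  then show ?thesis
    using assms by (subst emeasure_distr) auto
qed

lemma sets_borel_ereal_atMost: "sets (borel :: ereal measure) = sigma_sets UNIV (range atMost)"
proof -
  have "sets (borel :: ereal measure) = sigma_sets UNIV (range greaterThan)"
    by (subst borel_Ioi) (simp add: sets_measure_of)
  also have "\<dots> = sigma_sets UNIV (range atMost)"
  proof (rule sigma_sets_eqI)
    show "A \<in> sigma_sets UNIV (range atMost)" if "A \<in> range greaterThan" for A :: "ereal set"
    proof -
      from that obtain x where "A = {x<..}" by blast
      then have "A = UNIV - {..x}" by (auto simp: not_le)
      then show ?thesis by (auto intro: sigma_sets.Compl)
    qed
    show "A \<in> sigma_sets UNIV (range greaterThan)" if "A \<in> range atMost" for A :: "ereal set"
    proof -
      from that obtain x where "A = {..x}" by blast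
      then have "A = UNIV - {x<..}" by (auto simp: not_less)
      then show ?thesis by (auto intro: sigma_sets.Compl)
    qed
  qed
  finally show ?thesis .
qed

lemma emeasure_ereal_atMost_PInf:
  assumes "sets K = sets (borel :: ereal measure)"
  shows "emeasure K {..\<infinity>} = (SUP n. emeasure K {..ereal (real n)}) + emeasure K {\<infinity>}"
proof -
  have "(\<Union>n. {..ereal (real n)}) = {..<\<infinity>}"
    by (auto simp: less_PInf_Ex_of_nat order.order_iff_strict intro: order_trans[OF _ real_nat_ceiling_ge])
  then have "emeasure K {..<\<infinity>} = (SUP n. emeasure K {..ereal (real n)})"
    using assms by (subst SUP_emeasure_incseq) (auto simp: incseq_def)
  moreover have "emeasure K {..<\<infinity>} + emeasure K {\<infinity>} = emeasure K {..\<infinity>}"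
    using assms by (subst plus_emeasure) (auto intro!: arg_cong[where f = "emeasure K"])
  ultimately show ?thesis
    by simp
qed

lemma emeasure_ereal_atMost_MInf:
  assumes "sets K = sets (borel :: ereal measure)" and "\<And>n. emeasure K {..ereal (- real n)} \<noteq> \<infinity>"
  shows "emeasure K {..-\<infinity>} = (INF n. emeasure K {..ereal (- real n)})"
proof -
  have "(\<Inter>n. {..ereal (- real n)}) = {..-\<infinity>}"
  proof (intro set_eqI iffI)
    fix x :: ereal
    assume "x \<in> (\<Inter>n. {..ereal (- real n)})"
    then have le: "x \<le> ereal (- real n)" for n
      by auto
    show "x \<in> {..-\<infinity>}"
    proof (cases x)
      case (real r)
      obtain n :: nat where "- r < real n"
        using reals_Archimedean2 by blast
      then show ?thesis
        using le[of n] real by simp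
    qed (use le[of 0] in auto)
  qed auto
  then show ?thesis
    using assms by (subst INF_emeasure_decseq) (auto simp: decseq_def)
qed

lemma measure_ereal_eqI:
  fixes M N :: "ereal measure"
  assumes sets: "sets M = sets borel" "sets N = sets borel" and fin: "finite_measure M"
    and atMost_real: "\<And>a::real. emeasure M {..ereal a} = emeasure N {..ereal a}"
    and infinity: "emeasure M {\<infinity>} = emeasure N {\<infinity>}"
  shows "M = N"
proof (rule measure_eqI_generator_eq[where E = "range atMost" and \<Omega> = UNIV and A = "\<lambda>_. UNIV"])
  have fin_M: "emeasure M A \<noteq> \<infinity>" for A
    using finite_measure.emeasure_finite[OF fin] by simp
  then have fin_N: "emeasure N {..ereal (- real n)} \<noteq> \<infinity>" for n
    using atMost_real by metis
  show "emeasure M X = emeasure N X" if "X \<in> range atMost" for X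
  proof -
    obtain x where X: "X = {..x}"
      using \<open>X \<in> range atMost\<close> by blast
    show ?thesis
    proof (cases x)
      case PInf
      then show ?thesis
        using X atMost_real infinity by (simp add: emeasure_ereal_atMost_PInf[OF sets(1)]
            emeasure_ereal_atMost_PInf[OF sets(2)])
    next
      case MInf
      then show ?thesis
        using X atMost_real by (simp add: emeasure_ereal_atMost_MInf[OF sets(1) fin_M]
            emeasure_ereal_atMost_MInf[OF sets(2) fin_N])
    qed (use X atMost_real in simp)
  qed
  show "Int_stable (range (atMost :: ereal \<Rightarrow> ereal set))"
    by (auto simp: Int_stable_def intro!: exI[of _ "min _ _"])
qed (use sets sets_borel_ereal_atMost finite_measure.emeasure_finite[OF fin] in
    \<open>auto intro!: range_eqI[of _ _ \<infinity>]\<close>)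

definition survival :: "ereal measure \<Rightarrow> real \<Rightarrow> real" where
  "survival M w = measure M {ereal w<..}"

definition has_lifetime_density :: "ereal measure \<Rightarrow> (real \<Rightarrow> real) \<Rightarrow> bool" where
  "has_lifetime_density M g \<longleftrightarrow> prob_space M \<and> sets M = sets borel \<and>
     g \<in> borel_measurable borel \<and> (\<forall>s. 0 \<le> g s) \<and>
     (\<forall>t. emeasure M {..ereal t} = (\<integral>\<^sup>+s\<in>{0<..t}. ennreal (g s) \<partial>lborel))"

lemma survival_eq_1_minus:
  assumes "prob_space M" and "sets M = sets borel"
  shows "survival M w = 1 - measure M {..ereal w}"
proof -
  have "space M - {..ereal w} = {ereal w<..}"
    using sets_eq_imp_space_eq[OF assms(2)] by auto
  then show ?thesis
    using prob_space.prob_compl[OF assms(1), of "{..ereal w}"] assms(2) by (simp add: survival_def)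
qed

lemma measure_Ioc_eq_survival_diff:
  assumes "prob_space M" and "sets M = sets borel" and "a \<le> b"
  shows "measure M {ereal a<..ereal b} = survival M a - survival M b"
proof -
  have "{ereal a<..} = {ereal a<..ereal b} \<union> {ereal b<..}"
    using assms(3) by (auto intro: le_less_trans[of "ereal a" "ereal b"])
  then have "survival M a = measure M {ereal a<..ereal b} + survival M b"
    unfolding survival_def using assms(2)
    by (simp only:) (rule finite_measure.finite_measure_Union[OF prob_space.finite_measure[OF assms(1)]]; auto)
  then show ?thesis by simp
qed

lemma has_lifetime_density_iff_survival:
  assumes "prob_space M" and "sets M = sets borel"
  shows "has_lifetime_density M g \<longleftrightarrow> survival_with_density (survival M) g"
proof -
  have "emeasure M {..ereal t} = ennreal (1 - survival M t)" for t
    using assms by (simp add: survival_eq_1_minus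
        finite_measure.emeasure_eq_measure[OF prob_space.finite_measure[OF assms(1)]])
  moreover have "0 \<le> survival M w" "survival M w \<le> 1" for w
    by (simp_all add: survival_def prob_space.prob_le_1[OF assms(1)])
  ultimately show ?thesis
    using assms by (auto simp: has_lifetime_density_def survival_with_density_def)
qed

lemma has_lifetime_densityD:
  assumes "has_lifetime_density M g"
  shows "prob_space M" and "sets M = sets borel" and "survival_with_density (survival M) g"
  using assms has_lifetime_density_iff_survival[of M g] by (auto simp: has_lifetime_density_def)

lemma has_lifetime_densityI:
  assumes "prob_space M" and "sets M = sets borel" and "emeasure M {..0} = 0"
    and "g \<in> borel_measurable borel" and "\<And>s. 0 \<le> g s"
    and "\<And>t. 0 < t \<Longrightarrow> emeasure M {..ereal t} = (\<integral>\<^sup>+s\<in>{0<..t}. ennreal (g s) \<partial>lborel)"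
  shows "has_lifetime_density M g"
proof -
  have "emeasure M {..ereal t} = 0" if "t \<le> 0" for t
    using emeasure_mono[of "{..ereal t}" "{..0}" M] assms(2,3) that by (simp add: zero_ereal_def)
  then have "emeasure M {..ereal t} = (\<integral>\<^sup>+s\<in>{0<..t}. ennreal (g s) \<partial>lborel)" for t
    using assms(6)[of t] by (cases "0 < t") auto
  then show ?thesis
    using assms by (simp add: has_lifetime_density_def)
qed

lemma has_lifetime_density_survival_pos:
  assumes M: "has_lifetime_density M g" and h: "\<And>t. 0 < t \<Longrightarrow> h t = g t / survival M t"
    and h_int: "(\<integral>\<^sup>+t\<in>{0<..}. ennreal (h t) \<partial>lborel) < 1"
  shows "0 < survival M x"
proof -
  have "ennreal (1 - survival M x) < 1"
    using survival_with_density_hazard_bound[OF has_lifetime_densityD(3)[OF M] h] h_int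
    by (rule le_less_trans)
  then show ?thesis
    by simp
qed

lemma has_lifetime_density_emeasure_real_singleton:
  assumes M: "has_lifetime_density M g"
  shows "emeasure M {ereal c} = 0"
proof -
  note fin = prob_space.finite_measure[OF has_lifetime_densityD(1)[OF M]]
  note G = has_lifetime_densityD(3)[OF M]
  have "(\<lambda>n. c - 1 / Suc n) \<longlonglongrightarrow> c - 0"
    by (intro tendsto_intros LIMSEQ_inverse_real_of_nat[unfolded inverse_eq_divide])
  then have "(\<lambda>n. survival M (c - 1 / Suc n) - survival M c) \<longlonglongrightarrow> survival M c - survival M c"
    by (intro tendsto_intros isCont_tendsto_compose[OF survival_with_density_isCont[OF G]]) simp
  moreover have "measure M {ereal c} \<le> survival M (c - 1 / Suc n) - survival M c" for n
  proof -
    have "measure M {ereal c} \<le> measure M {ereal (c - 1 / Suc n)<..ereal c}"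
      using has_lifetime_densityD(2)[OF M] by (intro finite_measure.finite_measure_mono[OF fin]) auto
    then show ?thesis
      using measure_Ioc_eq_survival_diff[of M "c - 1 / Suc n" c] has_lifetime_densityD(1,2)[OF M] by simp
  qed
  ultimately have "measure M {ereal c} \<le> 0"
    by (intro LIMSEQ_le_const) auto
  then show ?thesis
    by (simp add: finite_measure.emeasure_eq_measure[OF fin] measure_le_0_iff)
qed

lemma has_lifetime_density_emeasure_atLeast:
  assumes M: "has_lifetime_density M g"
  shows "emeasure M {ereal c..} = ennreal (survival M c)"
proof -
  have "emeasure M {ereal c..} = emeasure M {ereal c} + emeasure M {ereal c<..}"
    using has_lifetime_densityD(2)[OF M] by (subst plus_emeasure) (auto intro!: arg_cong[where f = "emeasure M"])
  then show ?thesis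
    using has_lifetime_density_emeasure_real_singleton[OF M]
    by (simp add: finite_measure.emeasure_eq_measure[OF prob_space.finite_measure[OF has_lifetime_densityD(1)[OF M]]]
        survival_def)
qed

lemma distr_shift_lifetime_density:
  assumes M: "has_lifetime_density M g" and no_infinity: "emeasure M {\<infinity>} = 0"
  shows "distr M borel (\<lambda>v. ereal l + v) =
    distr (density lborel (\<lambda>t. ennreal (indicator {l<..} t * g (t - l)))) borel ereal"
proof (rule measure_ereal_eqI)
  have [measurable_cong]: "sets M = sets borel" and [measurable]: "g \<in> borel_measurable borel"
    using M by (simp_all add: has_lifetime_density_def)
  show "finite_measure (distr M borel (\<lambda>v. ereal l + v))"
    by (intro prob_space.finite_measure prob_space.prob_space_distr has_lifetime_densityD(1)[OF M]) simp
  show "emeasure (distr M borel (\<lambda>v. ereal l + v)) {..ereal a} =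
      emeasure (distr (density lborel (\<lambda>t. ennreal (indicator {l<..} t * g (t - l)))) borel ereal) {..ereal a}"
    for a
  proof -
    have "(\<lambda>v. ereal l + v) -` {..ereal a} = {..ereal (a - l)}"
    proof (intro set_eqI)
      fix v :: ereal
      show "v \<in> (\<lambda>v. ereal l + v) -` {..ereal a} \<longleftrightarrow> v \<in> {..ereal (a - l)}"
        by (cases v) auto
    qed
    then have "emeasure (distr M borel (\<lambda>v. ereal l + v)) {..ereal a} = emeasure M {..ereal (a - l)}"
      by (subst emeasure_distr) (simp_all add: sets_eq_imp_space_eq[OF \<open>sets M = sets borel\<close>])
    also have "\<dots> = (\<integral>\<^sup>+s. ennreal (indicator {l<..} (l + s) * g (l + s - l)) * indicator {..a} (l + s) \<partial>lborel)"
      using M unfolding has_lifetime_density_def by (auto intro!: nn_integral_cong simp: indicator_def)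
    also have "\<dots> = (\<integral>\<^sup>+t. ennreal (indicator {l<..} t * g (t - l)) * indicator {..a} t \<partial>lborel)"
      using nn_integral_real_affine[of "\<lambda>t. ennreal (indicator {l<..} t * g (t - l)) * indicator {..a} t" 1 l]
      by simp
    also have "\<dots> = emeasure (distr (density lborel (\<lambda>t. ennreal (indicator {l<..} t * g (t - l)))) borel ereal) {..ereal a}"
      using ereal_atMost_preimage by (subst emeasure_distr) (auto simp: emeasure_density)
    finally show ?thesis .
  qed
  have "(\<lambda>v. ereal l + v) -` {\<infinity>} = {\<infinity>}"
    by (auto simp: ereal_plus_eq_PInfty)
  then show "emeasure (distr M borel (\<lambda>v. ereal l + v)) {\<infinity>} =
      emeasure (distr (density lborel (\<lambda>t. ennreal (indicator {l<..} t * g (t - l)))) borel ereal) {\<infinity>}"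
    using no_infinity by (subst emeasure_distr_ereal_infinity) (simp_all add: emeasure_distr)
qed simp_all

lemma set_integral_shift_lifetime_density:
  assumes M: "has_lifetime_density M g" and "l \<le> t"
  shows "(LINT s:{l..t}|lborel. indicator {l<..} s * g (s - l)) = 1 - survival M (t - l)"
proof -
  note G = has_lifetime_densityD(3)[OF M]
  note [measurable] = survival_with_densityD(1)[OF G]
  have "(\<integral>\<^sup>+s. ennreal (indicator {l..t} s * (indicator {l<..} s * g (s - l))) \<partial>lborel) =
      (\<integral>\<^sup>+s. ennreal (g (s - l)) * indicator {l<..t} s \<partial>lborel)"
    by (intro nn_integral_cong) (auto simp: indicator_def)
  also have "\<dots> = (\<integral>\<^sup>+s. ennreal (g (l + s - l)) * indicator {l<..t} (l + s) \<partial>lborel)"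
    using nn_integral_real_affine[of "\<lambda>s. ennreal (g (s - l)) * indicator {l<..t} s" 1 l] by simp
  also have "\<dots> = ennreal (1 - survival M (t - l))"
    unfolding survival_with_densityD(5)[OF G, symmetric] by (intro nn_integral_cong) (auto simp: indicator_def)
  finally show ?thesis
    using survival_with_densityD(2,4)[OF G]
    by (simp add: set_lebesgue_integral_def integral_eq_nn_integral)
qed

lemma has_lifetime_density_exponential:
  assumes "0 < l"
  shows "has_lifetime_density (distr (density lborel (exponential_density l)) borel ereal) (exponential_density l)"
proof -
  have "(\<integral>\<^sup>+s. ennreal (exponential_density l s) * indicator {..t} s \<partial>lborel) =
      (\<integral>\<^sup>+s\<in>{0<..t}. ennreal (exponential_density l s) \<partial>lborel)" for t
    by (intro nn_integral_cong_AE eventually_mono[OF AE_lborel_singleton[of 0]])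
       (auto simp: exponential_density_def indicator_def)
  then show ?thesis
    using assms prob_space_exponential_density[OF assms] ereal_atMost_preimage
    by (auto simp: has_lifetime_density_def emeasure_distr emeasure_density exponential_density_nonneg
        intro!: prob_space.prob_space_distr)
qed

lemma survival_exponential:
  assumes "0 < l"
  shows "survival (distr (density lborel (exponential_density l)) borel ereal) w = exp (- l * max 0 w)"
proof -
  have "measure (distr (density lborel (exponential_density l)) borel ereal) {..ereal w} = erlang_CDF 0 l w"
    using emeasure_erlang_density[OF assms, of 0 w] erlang_CDF_nonneg[OF assms]
    by (simp add: measure_def emeasure_distr ereal_atMost_preimage)
  then show ?thesis
    using survival_eq_1_minus has_lifetime_densityD(1,2)[OF has_lifetime_density_exponential[OF assms]]
    by (simp add: erlang_CDF_0)
qed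

lemma hazard_exponential:
  assumes "0 < l" and "0 < w"
  shows "exponential_density l w / survival (distr (density lborel (exponential_density l)) borel ereal) w = l"
  unfolding survival_exponential[OF assms(1)] using assms by (simp add: exponential_density_def mult.commute)

lemma sets_cond_excess [simp, measurable_cong]: "sets (cond_excess M c) = sets borel"
  by (simp add: cond_excess_def)

lemma prob_space_cond_excess:
  assumes M: "has_lifetime_density M g" and pos: "0 < survival M c"
  shows "prob_space (cond_excess M c)"
proof -
  have [measurable_cong]: "sets M = sets borel"
    by (rule has_lifetime_densityD(2)[OF M])
  have "prob_space (uniform_measure M {ereal c..})"
    using pos by (intro prob_space_uniform_measure) (simp_all add: has_lifetime_density_emeasure_atLeast[OF M])
  then show ?thesis
    unfolding cond_excess_def by (rule prob_space.prob_space_distr) simp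
qed

lemma survival_cond_excess:
  assumes M: "has_lifetime_density M g" and pos: "0 < survival M c"
  shows "survival (cond_excess M c) w = survival M (c + max 0 w) / survival M c"
proof -
  have sets_M [measurable_cong]: "sets M = sets borel"
    by (rule has_lifetime_densityD(2)[OF M])
  then have "space M = UNIV"
    using sets_eq_imp_space_eq[OF sets_M] by simp
  have "{ereal c..} \<inter> (\<lambda>v. v - ereal c) -` {ereal w<..} =
      (if 0 \<le> w then {ereal (c + w)<..} else {ereal c..})"
  proof (intro set_eqI)
    fix v :: ereal
    show "v \<in> {ereal c..} \<inter> (\<lambda>v. v - ereal c) -` {ereal w<..} \<longleftrightarrow>
        v \<in> (if 0 \<le> w then {ereal (c + w)<..} else {ereal c..})"
      by (cases v) auto
  qed
  then have "emeasure M ({ereal c..} \<inter> (\<lambda>v. v - ereal c) -` {ereal w<..}) =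
      ennreal (survival M (c + max 0 w))"
    using has_lifetime_density_emeasure_atLeast[OF M, of c]
    by (simp add: survival_def
        finite_measure.emeasure_eq_measure[OF prob_space.finite_measure[OF has_lifetime_densityD(1)[OF M]]])
  moreover have "(\<lambda>v. v - ereal c) -` {ereal w<..} \<in> sets M"
    using measurable_sets[of "\<lambda>v. v - ereal c" borel borel "{ereal w<..}"] by simp
  ultimately have "emeasure (cond_excess M c) {ereal w<..} = ennreal (survival M (c + max 0 w) / survival M c)"
    using pos unfolding cond_excess_def
    by (subst emeasure_distr) (simp_all add: has_lifetime_density_emeasure_atLeast[OF M]
        divide_ennreal survival_def \<open>space M = UNIV\<close>)
  then show ?thesis
    using pos by (simp add: survival_def measure_def divide_nonneg_pos)
qed

lemma hazard_cond_excess: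
  assumes M: "has_lifetime_density M g" and pos: "0 < survival M c" and "0 \<le> w"
  shows "g (c + w) / survival M c / survival (cond_excess M c) w = g (c + w) / survival M (c + w)"
  using assms by (simp add: survival_cond_excess[OF M pos])

lemma has_lifetime_density_cond_excess:
  assumes M: "has_lifetime_density M g" and "0 \<le> c" and pos: "0 < survival M c"
  shows "has_lifetime_density (cond_excess M c) (\<lambda>s. g (c + s) / survival M c)"
proof -
  have "survival (cond_excess M c) = (\<lambda>w. survival M (c + max 0 w) / survival M c)"
    using survival_cond_excess[OF M pos] by (rule ext)
  then show ?thesis
    using survival_with_density_residual[OF has_lifetime_densityD(3)[OF M] assms(2,3)]
    by (simp add: has_lifetime_density_iff_survival prob_space_cond_excess[OF M pos])
qed

section \<open>Minimum of independent lifetimes\<close>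

lemma measurable_Min_PiM:
  fixes M :: "'i \<Rightarrow> 'a::{linorder_topology, second_countable_topology} measure"
  assumes "finite I" and "\<And>i. i \<in> I \<Longrightarrow> sets (M i) = sets borel"
  shows "(\<lambda>\<omega>. Min (\<omega> ` I)) \<in> borel_measurable (PiM I M)"
proof -
  have "(\<lambda>\<omega>. Min ((\<lambda>i. \<omega> i) ` I)) \<in> borel_measurable (PiM I M)"
  proof (rule borel_measurable_Min[OF assms(1)])
    fix i assume "i \<in> I"
    then have "(\<lambda>\<omega>. \<omega> i) \<in> measurable (PiM I M) (M i)"
      by (rule measurable_component_singleton)
    then show "(\<lambda>\<omega>. \<omega> i) \<in> borel_measurable (PiM I M)"
      using measurable_cong_sets[OF refl assms(2)[OF \<open>i \<in> I\<close>]] by blast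
  qed
  then show ?thesis
    by simp
qed

lemma emeasure_distr_Min_upward_closed:
  fixes M :: "'i \<Rightarrow> ereal measure"
  assumes I: "finite I" "I \<noteq> {}"
    and M: "\<And>i. i \<in> I \<Longrightarrow> prob_space (M i)" "\<And>i. i \<in> I \<Longrightarrow> sets (M i) = sets borel"
    and U: "U \<in> sets borel" "\<And>x y. x \<in> U \<Longrightarrow> x \<le> y \<Longrightarrow> y \<in> U"
  shows "emeasure (distr (PiM I M) borel (\<lambda>\<omega>. Min (\<omega> ` I))) U = (\<Prod>i\<in>I. emeasure (M i) U)"
proof -
  obtain i0 where "i0 \<in> I"
    using I by blast
  define M' where "M' i = (if i \<in> I then M i else M i0)" for i
  have PiM_M': "PiM I M = PiM I M'"
    by (rule PiM_cong) (simp_all add: M'_def)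
  have sets_M' [measurable_cong]: "sets (M' i) = sets borel" for i
    using M(2) \<open>i0 \<in> I\<close> by (simp add: M'_def)
  have "product_sigma_finite M'"
    using M(1) \<open>i0 \<in> I\<close> by (simp add: product_sigma_finite_def M'_def prob_space_imp_sigma_finite)
  have "(\<lambda>\<omega>. Min (\<omega> ` I)) \<in> borel_measurable (PiM I M')"
    using I(1) sets_M' by (rule measurable_Min_PiM)
  moreover have "(\<lambda>\<omega>. Min (\<omega> ` I)) -` U \<inter> space (PiM I M') = PiE I (\<lambda>_. U)"
  proof -
    have "Min (\<omega> ` I) \<in> U \<longleftrightarrow> (\<forall>i\<in>I. \<omega> i \<in> U)" for \<omega> :: "'i \<Rightarrow> ereal"
    proof
      show "\<forall>i\<in>I. \<omega> i \<in> U" if "Min (\<omega> ` I) \<in> U"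
        using that I(1) U(2) by auto
      have "Min (\<omega> ` I) \<in> \<omega> ` I"
        using I by (intro Min_in) auto
      then show "Min (\<omega> ` I) \<in> U" if "\<forall>i\<in>I. \<omega> i \<in> U"
        using that by auto
    qed
    moreover have "space (M' i) = UNIV" for i
      using sets_eq_imp_space_eq[OF sets_M'] by simp
    ultimately show ?thesis
      by (auto simp: space_PiM PiE_def Pi_def)
  qed
  ultimately have "emeasure (distr (PiM I M') borel (\<lambda>\<omega>. Min (\<omega> ` I))) U = (\<Prod>i\<in>I. emeasure (M' i) U)"
    using I(1) U(1) by (simp add: emeasure_distr product_sigma_finite.emeasure_PiM[OF \<open>product_sigma_finite M'\<close>] sets_M')
  moreover have "(\<Prod>i\<in>I. emeasure (M' i) U) = (\<Prod>i\<in>I. emeasure (M i) U)"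
    by (rule prod.cong) (simp_all add: M'_def)
  ultimately show ?thesis
    by (simp add: PiM_M')
qed

lemma
  fixes M :: "'i \<Rightarrow> ereal measure"
  assumes I: "finite I" "I \<noteq> {}"
    and M: "\<And>i. i \<in> I \<Longrightarrow> prob_space (M i)" "\<And>i. i \<in> I \<Longrightarrow> sets (M i) = sets borel"
  shows prob_space_distr_Min: "prob_space (distr (PiM I M) borel (\<lambda>\<omega>. Min (\<omega> ` I)))"
    and survival_distr_Min: "survival (distr (PiM I M) borel (\<lambda>\<omega>. Min (\<omega> ` I))) w = (\<Prod>i\<in>I. survival (M i) w)"
proof -
  show "prob_space (distr (PiM I M) borel (\<lambda>\<omega>. Min (\<omega> ` I)))"
    using M(1) measurable_Min_PiM[OF I(1) M(2)] by (intro prob_space.prob_space_distr prob_space_PiM) auto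
  have "emeasure (distr (PiM I M) borel (\<lambda>\<omega>. Min (\<omega> ` I))) {ereal w<..} = ennreal (\<Prod>i\<in>I. survival (M i) w)"
    using emeasure_distr_Min_upward_closed[OF I M, where U = "{ereal w<..}"]
    by (auto simp: survival_def finite_measure.emeasure_eq_measure[OF prob_space.finite_measure[OF M(1)]]
        prod_ennreal)
  then show "survival (distr (PiM I M) borel (\<lambda>\<omega>. Min (\<omega> ` I))) w = (\<Prod>i\<in>I. survival (M i) w)"
    by (simp add: survival_def measure_def prod_nonneg)
qed

lemma has_lifetime_density_Min:
  fixes M :: "'i \<Rightarrow> ereal measure"
  assumes I: "finite I" "I \<noteq> {}" and M: "\<And>i. i \<in> I \<Longrightarrow> has_lifetime_density (M i) (g i)"
  shows "has_lifetime_density (distr (PiM I M) borel (\<lambda>\<omega>. Min (\<omega> ` I)))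
    (\<lambda>s. \<Sum>j\<in>I. g j s * (\<Prod>k\<in>I-{j}. survival (M k) s))"
proof -
  note M_prob = has_lifetime_densityD(1)[OF M] and M_sets = has_lifetime_densityD(2)[OF M]
  have "survival (distr (PiM I M) borel (\<lambda>\<omega>. Min (\<omega> ` I))) = (\<lambda>w. \<Prod>i\<in>I. survival (M i) w)"
    using survival_distr_Min[OF I M_prob M_sets] by (rule ext)
  then show ?thesis
    using survival_with_density_prod[OF I(1) has_lifetime_densityD(3)[OF M]]
    by (simp add: has_lifetime_density_iff_survival prob_space_distr_Min[OF I M_prob M_sets])
qed

lemma shifted_Min_hazard_eq_sum:
  fixes M :: "'i \<Rightarrow> ereal measure"
  assumes I: "finite I" "i0 \<in> I" and M: "\<And>i. i \<in> I \<Longrightarrow> has_lifetime_density (M i) (g i)"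
    and pos: "\<And>i w. i \<in> I \<Longrightarrow> 0 < survival (M i) w" and no_infinity: "emeasure (M i0) {\<infinity>} = 0"
  shows "\<exists>G. G \<in> borel_measurable borel \<and> (\<forall>t. 0 \<le> G t) \<and>
    distr (PiM I M) borel (\<lambda>\<omega>. ereal l + Min (\<omega> ` I)) = distr (density lborel (\<lambda>t. ennreal (G t))) borel ereal \<and>
    (\<forall>t > l. G t / (1 - (LINT s:{l..t}|lborel. G s)) = (\<Sum>i\<in>I. g i (t - l) / survival (M i) (t - l)))"
proof -
  have I_ne: "I \<noteq> {}"
    using I(2) by blast
  note M_prob = has_lifetime_densityD(1)[OF M] and M_sets = has_lifetime_densityD(2)[OF M]
  define K where "K = distr (PiM I M) borel (\<lambda>\<omega>. Min (\<omega> ` I))"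
  define \<Phi> where "\<Phi> s = (\<Sum>j\<in>I. g j s * (\<Prod>k\<in>I-{j}. survival (M k) s))" for s
  define G where "G t = indicator {l<..} t * \<Phi> (t - l)" for t
  have K: "has_lifetime_density K \<Phi>"
    unfolding K_def \<Phi>_def using I(1) I_ne M by (rule has_lifetime_density_Min)
  note [measurable] = survival_with_densityD(1)[OF has_lifetime_densityD(3)[OF K]]
  have "emeasure K {\<infinity>} = (\<Prod>i\<in>I. emeasure (M i) {\<infinity>})"
    unfolding K_def by (rule emeasure_distr_Min_upward_closed[OF I(1) I_ne M_prob M_sets]) auto
  also have "\<dots> = 0"
    using I no_infinity by (auto intro: prod_zero)
  finally have law_K: "distr K borel (\<lambda>v. ereal l + v) = distr (density lborel (\<lambda>t. ennreal (G t))) borel ereal"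
    unfolding G_def by (rule distr_shift_lifetime_density[OF K])
  have "distr (PiM I M) borel (\<lambda>\<omega>. ereal l + Min (\<omega> ` I)) = distr K borel (\<lambda>v. ereal l + v)"
    using measurable_Min_PiM[OF I(1) M_sets] unfolding K_def by (subst distr_distr) (auto simp: comp_def)
  then have law: "distr (PiM I M) borel (\<lambda>\<omega>. ereal l + Min (\<omega> ` I)) = distr (density lborel (\<lambda>t. ennreal (G t))) borel ereal"
    using law_K by simp
  have hazard: "G t / (1 - (LINT s:{l..t}|lborel. G s)) = (\<Sum>i\<in>I. g i (t - l) / survival (M i) (t - l))"
    if "l < t" for t
  proof -
    have "G t / (1 - (LINT s:{l..t}|lborel. G s)) = \<Phi> (t - l) / survival K (t - l)"
      using that by (simp add: G_def set_integral_shift_lifetime_density[OF K])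
    also have "survival K (t - l) = (\<Prod>i\<in>I. survival (M i) (t - l))"
      unfolding K_def by (rule survival_distr_Min[OF I(1) I_ne M_prob M_sets])
    finally show ?thesis
      using pos I(1) by (simp add: \<Phi>_def sum_mult_prod_remove less_imp_neq[symmetric] prod_pos)
  qed
  have "G \<in> borel_measurable borel"
    unfolding G_def by measurable
  moreover have "0 \<le> G t" for t
    using survival_with_densityD(2)[OF has_lifetime_densityD(3)[OF K]] by (simp add: G_def)
  ultimately show ?thesis
    using law hazard by blast
qed

lemma le_last_time:
  assumes "sorted_wrt (<) ts" and "s \<in> set ts"
  shows "s \<le> last_time ts"
proof -
  obtain i where "i < length ts" "s = ts ! i"
    using assms(2) by (auto simp: in_set_conv_nth)
  then show ?thesis
    using sorted_nth_mono[OF strict_sorted_imp_sorted[OF assms(1)], of i "length ts - 1"]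
    by (auto simp: last_time_def last_conv_nth)
qed

lemma next_time_law_hazard:
  assumes eta: "0 < eta" and mu: "has_lifetime_density mu f" and pos: "\<And>x. 0 < survival mu x"
    and h: "\<And>t. 0 < t \<Longrightarrow> h t = f t / survival mu t" and ts: "sorted_wrt (<) ts"
  shows "\<exists>g. g \<in> borel_measurable borel \<and> (\<forall>t. g t \<ge> 0) \<and>
    next_time_law mu eta ts = distr (density lborel (\<lambda>t. ennreal (g t))) borel ereal \<and>
    (\<forall>t > last_time ts. g t / (1 - (LINT s:{last_time ts..t}|lborel. g s)) = eta + (\<Sum>s\<leftarrow>ts. h (t - s)))"
proof -
  define l where "l = last_time ts"
  define c where "c j = l - ts ! (j - 1)" for j
  define M where "M = (\<lambda>j. if j = 0 then distr (density lborel (exponential_density eta)) borel ereal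
    else cond_excess mu (c j))"
  define g where "g j = (if j = 0 then exponential_density eta else (\<lambda>s. f (c j + s) / survival mu (c j)))" for j
  have c_nonneg: "0 \<le> c j" if "j \<in> {1..length ts}" for j
    using that le_last_time[OF ts nth_mem, of "j - 1"] by (auto simp: c_def l_def)
  have comp: "has_lifetime_density (M j) (g j)" "0 < survival (M j) w" if "j \<in> {0..length ts}" for j w
    using that c_nonneg[of j] eta pos
    by (auto simp: M_def g_def has_lifetime_density_exponential survival_exponential
        has_lifetime_density_cond_excess[OF mu] survival_cond_excess[OF mu])
  have "g j w / survival (M j) w = (if j = 0 then eta else h (c j + w))"
    if "0 < w" "j \<in> {0..length ts}" for j w
  proof (cases "j = 0")
    case False
    then have "g j w / survival (M j) w = f (c j + w) / survival mu (c j + w)"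
      using hazard_cond_excess[OF mu pos, where c = "c j" and w = w] that(1) by (simp add: M_def g_def)
    then show ?thesis
      using False that c_nonneg[of j] h[of "c j + w"] by simp
  qed (use that eta in \<open>simp add: M_def g_def hazard_exponential\<close>)
  then have "(\<Sum>j\<in>{0..length ts}. g j (t - l) / survival (M j) (t - l)) = eta + (\<Sum>s\<leftarrow>ts. h (t - s))"
    if "l < t" for t
    using that by (simp add: sum.atLeast_Suc_atMost sum.atLeast1_atMost_eq sum_list_sum_nth
        atLeast0LessThan c_def)
  moreover have "next_time_law mu eta ts = distr (PiM {0..length ts} M) borel (\<lambda>\<omega>. ereal l + Min (\<omega> ` {0..length ts}))"
    unfolding next_time_law_def Let_def M_def c_def l_def ..
  moreover have "emeasure (M 0) {\<infinity>} = 0"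
    by (simp add: M_def emeasure_distr_ereal_infinity)
  then have "\<exists>G. G \<in> borel_measurable borel \<and> (\<forall>t. 0 \<le> G t) \<and>
    distr (PiM {0..length ts} M) borel (\<lambda>\<omega>. ereal l + Min (\<omega> ` {0..length ts})) =
      distr (density lborel (\<lambda>t. ennreal (G t))) borel ereal \<and>
    (\<forall>t > l. G t / (1 - (LINT s:{l..t}|lborel. G s)) =
      (\<Sum>j\<in>{0..length ts}. g j (t - l) / survival (M j) (t - l)))"
    using comp by (intro shifted_Min_hazard_eq_sum) auto
  ultimately show ?thesis
    unfolding l_def by auto
qed

theorem theorem1:
  fixes mu :: "ereal measure" and eta :: real and f h :: "real \<Rightarrow> real"
  assumes eta_pos: "eta > 0"
    and mu_prob: "prob_space mu" and mu_sets: "sets mu = sets borel"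
    and mu_pos: "emeasure mu {..0} = 0"
    and f_meas: "f \<in> borel_measurable borel" and f_nonneg: "\<And>t. f t \<ge> 0"
    and f_dens: "\<And>t. t > 0 \<Longrightarrow> emeasure mu {..ereal t} = (\<integral>\<^sup>+ s\<in>{0<..t}. ennreal (f s) \<partial>lborel)"
    and h_def: "\<And>t. t > 0 \<Longrightarrow> h t = f t / (1 - measure mu {..ereal t})"
    and h_int: "(\<integral>\<^sup>+ t\<in>{0<..}. ennreal (h t) \<partial>lborel) < 1"
  shows "\<forall>ts. sorted_wrt (<) ts \<and> (\<forall>s\<in>set ts. s > 0) \<longrightarrow>
           (\<exists>g. g \<in> borel_measurable borel \<and> (\<forall>t. g t \<ge> 0) \<and>
                next_time_law mu eta ts = distr (density lborel (\<lambda>t. ennreal (g t))) borel ereal \<and>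
                (\<forall>t > last_time ts.
                   g t / (1 - (LINT s:{last_time ts..t}|lborel. g s))
                   = eta + (\<Sum>s\<leftarrow>ts. h (t - s))))"
proof -
  have mu: "has_lifetime_density mu f"
    using mu_prob mu_sets mu_pos f_meas f_nonneg f_dens by (rule has_lifetime_densityI)
  have h: "h t = f t / survival mu t" if "0 < t" for t
    using h_def[OF that] by (simp add: survival_eq_1_minus[OF mu_prob mu_sets])
  have pos: "0 < survival mu x" for x
    using mu h h_int by (rule has_lifetime_density_survival_pos)
  show ?thesis
    by (intro allI impI next_time_law_hazard[OF eta_pos mu pos h]) auto
qed

end
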